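(* Every reflection point of $\mathrm{OPT}$ that is not a tip (endpoint) of a segment is a pure reflection point.
   Context: Instance: vertical line segments $s_1,\dots,s_n$ in $\mathbb{R}^2$, each of length $1$, with pairwise distinct $x$-coordinates. A tour is a cyclic sequence of points $p_1,\dots,p_\sigma$, each on some segment, with every segment containing at least one $p_j$; the straight segments joining consecutive points are legs; cost is total length. $\mathrm{OPT}$ is a fixed minimum-cost tour, oriented $p_1\to p_2\to\cdots$, with no two consecutive points on the same segment and not self-crossing. For a point $p_j$ of $\mathrm{OPT}$ on segment $s$, a leg incident to $p_j$ is to the left (right) of $s$ if it lies in $x\le x(s)$ (resp. $x\ge x(s)$); $p_j$ is a reflection point if both incident legs are to the left of $s$ or both are to the right of $s$. A reflection point $p_j$ on $s$ is a pure reflection point if the two legs incident to $p_j$ make the same angle with $s$. *)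

theory Defs
  imports "HOL-Analysis.Analysis"
begin

type_synonym pt = "real \<times> real"

definition vseg :: "(nat \<Rightarrow> real) \<Rightarrow> (nat \<Rightarrow> real) \<Rightarrow> nat \<Rightarrow> pt set" where
  "vseg sx sy i = {(sx i, y) | y. sy i \<le> y \<and> y \<le> sy i + 1}"

definition instance_ok :: "nat \<Rightarrow> (nat \<Rightarrow> real) \<Rightarrow> bool" where
  "instance_ok n sx \<longleftrightarrow> inj_on sx {..<n}"

definition is_tour :: "nat \<Rightarrow> (nat \<Rightarrow> real) \<Rightarrow> (nat \<Rightarrow> real) \<Rightarrow> pt list \<Rightarrow> bool" where
  "is_tour n sx sy ps \<longleftrightarrow> ps \<noteq> [] \<and>
     (\<forall>p\<in>set ps. \<exists>i<n. p \<in> vseg sx sy i) \<and>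
     (\<forall>i<n. \<exists>p\<in>set ps. p \<in> vseg sx sy i)"

definition nxt :: "pt list \<Rightarrow> nat \<Rightarrow> pt" where
  "nxt ps j = ps ! ((j + 1) mod length ps)"

definition prv :: "pt list \<Rightarrow> nat \<Rightarrow> pt" where
  "prv ps j = ps ! ((j + length ps - 1) mod length ps)"

definition tour_cost :: "pt list \<Rightarrow> real" where
  "tour_cost ps = (\<Sum>j<length ps. dist (ps ! j) (nxt ps j))"

definition is_opt_tour :: "nat \<Rightarrow> (nat \<Rightarrow> real) \<Rightarrow> (nat \<Rightarrow> real) \<Rightarrow> pt list \<Rightarrow> bool" where
  "is_opt_tour n sx sy ps \<longleftrightarrow> is_tour n sx sy ps \<and>
     (\<forall>qs. is_tour n sx sy qs \<longrightarrow> tour_cost ps \<le> tour_cost qs)"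

definition no_consec_same_seg :: "nat \<Rightarrow> (nat \<Rightarrow> real) \<Rightarrow> (nat \<Rightarrow> real) \<Rightarrow> pt list \<Rightarrow> bool" where
  "no_consec_same_seg n sx sy ps \<longleftrightarrow>
     (\<forall>j<length ps. \<forall>i<n. \<not> (ps ! j \<in> vseg sx sy i \<and> nxt ps j \<in> vseg sx sy i))"

definition legs_cross :: "pt \<Rightarrow> pt \<Rightarrow> pt \<Rightarrow> pt \<Rightarrow> bool" where
  "legs_cross a b c d \<longleftrightarrow>
     (fst b - fst a) * (snd d - snd c) - (snd b - snd a) * (fst d - fst c) \<noteq> 0 \<and>
     open_segment a b \<inter> open_segment c d \<noteq> {}"

definition not_self_crossing :: "pt list \<Rightarrow> bool" where
  "not_self_crossing ps \<longleftrightarrow>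
     (\<forall>j<length ps. \<forall>k<length ps. \<not> legs_cross (ps ! j) (nxt ps j) (ps ! k) (nxt ps k))"

text \<open>Leg from p_j to q lies to the left of segment with x-coordinate x iff it lies in
  {x' <= x}; since p_j has x-coordinate x, this means fst q <= x.\<close>
definition is_reflection_point ::
  "(nat \<Rightarrow> real) \<Rightarrow> (nat \<Rightarrow> real) \<Rightarrow> pt list \<Rightarrow> nat \<Rightarrow> nat \<Rightarrow> bool" where
  "is_reflection_point sx sy ps j i \<longleftrightarrow> ps ! j \<in> vseg sx sy i \<and>
     ((closed_segment (ps ! j) (prv ps j) \<subseteq> {q. fst q \<le> sx i} \<and>
       closed_segment (ps ! j) (nxt ps j) \<subseteq> {q. fst q \<le> sx i}) \<or>
      (closed_segment (ps ! j) (prv ps j) \<subseteq> {q. fst q \<ge> sx i} \<and>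
       closed_segment (ps ! j) (nxt ps j) \<subseteq> {q. fst q \<ge> sx i}))"

definition vec_angle :: "pt \<Rightarrow> pt \<Rightarrow> real" where
  "vec_angle u v = arccos (inner u v / (norm u * norm v))"

text \<open>Pure reflection: the two legs make the same angle with s, i.e. the angle of the
  incoming leg with one direction of s equals the angle of the outgoing leg with the
  opposite direction of s (angle of incidence = angle of reflection).\<close>
definition is_pure_reflection_point ::
  "(nat \<Rightarrow> real) \<Rightarrow> (nat \<Rightarrow> real) \<Rightarrow> pt list \<Rightarrow> nat \<Rightarrow> nat \<Rightarrow> bool" where
  "is_pure_reflection_point sx sy ps j i \<longleftrightarrow> is_reflection_point sx sy ps j i \<and>
     vec_angle (prv ps j - ps ! j) (0, 1) = vec_angle (nxt ps j - ps ! j) (0, -1)"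

definition is_tip :: "(nat \<Rightarrow> real) \<Rightarrow> (nat \<Rightarrow> real) \<Rightarrow> nat \<Rightarrow> pt \<Rightarrow> bool" where
  "is_tip sx sy i p \<longleftrightarrow> p = (sx i, sy i) \<or> p = (sx i, sy i + 1)"

end

theory Submission
  imports Defs
begin

text \<open>Moving the point
  p = (x, y) of OPT to (x, s) on its own segment gives another tour whose cost changes
  only in the two legs at p. As p is not a tip, s ranges over a neighbourhood of y, so
  s \<mapsto> dist a (x, s) + dist (x, s) b has a local minimum at y, where a and b are
  the neighbours of p. Its derivative there is minus the sum of the cosines of the
  angles the two legs make with the upward direction, so these cosines are opposite:
  the legs make equal angles with the segment.\<close>

lemma Suc_mod_eq_iff_pred_mod:
  fixes k j L :: nat
  assumes "k < L" "j < L"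
  shows "(k + 1) mod L = j \<longleftrightarrow> k = (j + L - 1) mod L"
  using assms by (auto simp: mod_if)

lemma nxt_pred_mod:
  assumes "j < length ps"
  shows "nxt ps ((j + length ps - 1) mod length ps) = ps ! j"
proof -
  have "0 < length ps" using assms by linarith
  then have "((j + length ps - 1) mod length ps + 1) mod length ps = j"
    using assms Suc_mod_eq_iff_pred_mod[of "(j + length ps - 1) mod length ps" "length ps" j]
    by simp
  then show ?thesis by (simp add: nxt_def)
qed

lemma tour_cost_list_update:
  assumes "j < length ps" and "2 \<le> length ps"
  shows "tour_cost (ps[j := q]) =
    tour_cost ps - dist (prv ps j) (ps ! j) - dist (ps ! j) (nxt ps j)
      + dist (prv ps j) q + dist q (nxt ps j)"
proof -
  define L where "L = length ps"
  define jm where "jm = (j + L - 1) mod L"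
  have j: "j < L" and two: "2 \<le> L" using assms by (simp_all add: L_def)
  then have jm: "jm < L" "(jm + 1) mod L = j"
    using Suc_mod_eq_iff_pred_mod[of jm L j] by (simp_all add: jm_def)
  have j_succ: "(j + 1) mod L \<noteq> j"
    using j two by (cases "j + 1 = L") auto
  then have "jm \<noteq> j" using jm(2) by auto
  have sum_split: "(\<Sum>k<L. f k) = f j + f jm + (\<Sum>k\<in>{..<L} - {j} - {jm}. f k)"
    for f :: "nat \<Rightarrow> real"
  proof -
    have "(\<Sum>k<L. f k) = f j + (\<Sum>k\<in>{..<L} - {j}. f k)"
      using j by (simp add: sum.remove)
    also have "(\<Sum>k\<in>{..<L} - {j}. f k) = f jm + (\<Sum>k\<in>{..<L} - {j} - {jm}. f k)"
      using jm \<open>jm \<noteq> j\<close> by (intro sum.remove) auto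
    finally show ?thesis by simp
  qed
  define qs where "qs = ps[j := q]"
  have cost: "tour_cost xs = (\<Sum>k<L. dist (xs ! k) (xs ! ((k + 1) mod L)))"
    if "length xs = L" for xs
    using that by (simp add: tour_cost_def nxt_def)
  have rest: "(\<Sum>k\<in>{..<L} - {j} - {jm}. dist (qs ! k) (qs ! ((k + 1) mod L)))
      = (\<Sum>k\<in>{..<L} - {j} - {jm}. dist (ps ! k) (ps ! ((k + 1) mod L)))"
  proof (rule sum.cong)
    fix k assume "k \<in> {..<L} - {j} - {jm}"
    then have "k \<noteq> j" "(k + 1) mod L \<noteq> j"
      using j Suc_mod_eq_iff_pred_mod[of k L j] by (auto simp: jm_def)
    then show "dist (qs ! k) (qs ! ((k + 1) mod L)) = dist (ps ! k) (ps ! ((k + 1) mod L))"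
      by (simp add: qs_def)
  qed simp
  have "prv ps j = ps ! jm" "nxt ps j = ps ! ((j + 1) mod L)"
    by (simp_all add: prv_def nxt_def jm_def L_def)
  moreover have "length qs = L" "length ps = L" by (simp_all add: qs_def L_def)
  moreover have "qs ! j = q" "qs ! jm = ps ! jm" "qs ! ((j + 1) mod L) = ps ! ((j + 1) mod L)"
    using j \<open>jm \<noteq> j\<close> j_succ \<open>length ps = L\<close> by (simp_all add: qs_def)
  ultimately show ?thesis
    using cost[of ps] cost[of qs] sum_split rest jm(2)
    by (simp add: qs_def[symmetric] dist_commute)
qed

lemma fst_mem_vseg: "p \<in> vseg sx sy i \<Longrightarrow> fst p = sx i"
  by (auto simp: vseg_def)

lemma is_tour_list_update_same_seg:
  assumes "is_tour n sx sy ps" "instance_ok n sx" "j < length ps" "i < n"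
    and "ps ! j \<in> vseg sx sy i" "q \<in> vseg sx sy i"
  shows "is_tour n sx sy (ps[j := q])"
  unfolding is_tour_def
proof (intro conjI ballI allI impI)
  show "ps[j := q] \<noteq> []" using assms(1) by (simp add: is_tour_def)
next
  fix p assume "p \<in> set (ps[j := q])"
  then have "p \<in> insert q (set ps)" using set_update_subset_insert by fast
  then show "\<exists>i<n. p \<in> vseg sx sy i" using assms(1,4,6) by (auto simp: is_tour_def)
next
  fix i' assume "i' < n"
  then obtain k where k: "k < length ps" "ps ! k \<in> vseg sx sy i'"
    using assms(1) by (metis is_tour_def in_set_conv_nth)
  show "\<exists>p\<in>set (ps[j := q]). p \<in> vseg sx sy i'"
  proof (cases "k = j")
    case True
    then have "sx i' = sx i" using k(2) assms(5) by (simp add: fst_mem_vseg [symmetric])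
    then have "i' = i"
      using assms(2,4) \<open>i' < n\<close> by (auto simp: instance_ok_def inj_on_def)
    then show ?thesis using assms(3,6) by (auto simp: set_update_memI)
  next
    case False
    then show ?thesis using k by (metis length_list_update nth_list_update_neq nth_mem)
  qed
qed

lemma has_real_derivative_dist_vertical:
  fixes a :: pt
  assumes "a \<noteq> (x, t)"
  shows "((\<lambda>s. dist a (x, s)) has_real_derivative (t - snd a) / dist a (x, t)) (at t)"
proof -
  have dist_eq: "dist a (x, s) = sqrt ((fst a - x)\<^sup>2 + (snd a - s)\<^sup>2)" for s
    by (cases a) (simp add: dist_Pair_Pair dist_real_def)
  have "0 < (fst a - x)\<^sup>2 + (snd a - t)\<^sup>2"
    using assms by (cases a) (auto simp: sum_power2_gt_zero_iff)
  then have "((\<lambda>s. sqrt ((fst a - x)\<^sup>2 + (snd a - s)\<^sup>2)) has_real_derivative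
      (t - snd a) / sqrt ((fst a - x)\<^sup>2 + (snd a - t)\<^sup>2)) (at t)"
    by (auto intro!: derivative_eq_intros simp: divide_simps)
  then show ?thesis by (simp only: dist_eq)
qed

lemma vec_angle_up: "vec_angle u (0, 1) = arccos (snd u / norm u)"
  by (cases u) (simp add: vec_angle_def inner_Pair norm_Pair)

lemma vec_angle_down: "vec_angle u (0, - 1) = arccos (- snd u / norm u)"
  by (cases u) (simp add: vec_angle_def inner_Pair norm_Pair)

lemma vec_angle_eq_if_vertical_local_min:
  fixes a b :: pt
  assumes "a \<noteq> (x, y)" "b \<noteq> (x, y)" "0 < d"
    and "\<And>s. \<bar>y - s\<bar> < d \<Longrightarrow> dist a (x, y) + dist (x, y) b \<le> dist a (x, s) + dist (x, s) b"
  shows "vec_angle (a - (x, y)) (0, 1) = vec_angle (b - (x, y)) (0, - 1)"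
proof -
  have "((\<lambda>s. dist a (x, s) + dist b (x, s)) has_real_derivative
      (y - snd a) / dist a (x, y) + (y - snd b) / dist b (x, y)) (at y)"
    using assms(1,2) by (intro DERIV_add has_real_derivative_dist_vertical)
  then have "(y - snd a) / dist a (x, y) + (y - snd b) / dist b (x, y) = 0"
    using assms(3,4) by (intro DERIV_local_min allI impI) (auto simp: dist_commute)
  moreover have "norm (a - (x, y)) \<noteq> 0" "norm (b - (x, y)) \<noteq> 0"
    using assms(1,2) by simp_all
  ultimately have "snd (a - (x, y)) / norm (a - (x, y)) = - snd (b - (x, y)) / norm (b - (x, y))"
    by (simp add: dist_norm field_simps)
  then show ?thesis by (simp add: vec_angle_up vec_angle_down)
qed

lemma neighbours_notin_vseg:
  assumes "no_consec_same_seg n sx sy ps" "j < length ps" "i < n" "ps ! j \<in> vseg sx sy i"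
  shows "prv ps j \<notin> vseg sx sy i" "nxt ps j \<notin> vseg sx sy i"
proof -
  define jm where "jm = (j + length ps - 1) mod length ps"
  have "jm < length ps" using assms(2) by (simp add: jm_def del: length_greater_0_conv)
  moreover have "ps ! jm = prv ps j" "nxt ps jm = ps ! j"
    using nxt_pred_mod[OF assms(2)] by (simp_all add: jm_def prv_def)
  ultimately show "prv ps j \<notin> vseg sx sy i" "nxt ps j \<notin> vseg sx sy i"
    using assms by (metis no_consec_same_seg_def)+
qed

lemma length_ge_2_if_nxt_neq:
  assumes "j < length ps" "nxt ps j \<noteq> ps ! j"
  shows "2 \<le> length ps"
  using assms by (cases "length ps = 1") (auto simp: nxt_def)

lemma opt_tour_legs_le_move_along_seg:
  assumes "is_opt_tour n sx sy ps" "instance_ok n sx" "j < length ps" "2 \<le> length ps" "i < n"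
    and "ps ! j \<in> vseg sx sy i" "q \<in> vseg sx sy i"
  shows "dist (prv ps j) (ps ! j) + dist (ps ! j) (nxt ps j) \<le> dist (prv ps j) q + dist q (nxt ps j)"
proof -
  have "is_tour n sx sy (ps[j := q])"
    using assms by (intro is_tour_list_update_same_seg) (auto simp: is_opt_tour_def)
  then have "tour_cost ps \<le> tour_cost (ps[j := q])"
    using assms(1) by (simp add: is_opt_tour_def)
  then show ?thesis using tour_cost_list_update[OF assms(3,4)] by simp
qed

theorem lemma2:
  fixes n :: nat and sx sy :: "nat \<Rightarrow> real" and OPT :: "pt list" and j i :: nat
  assumes "instance_ok n sx"
    and "is_opt_tour n sx sy OPT"
    and "no_consec_same_seg n sx sy OPT"
    and "not_self_crossing OPT"
    and "j < length OPT" and "i < n"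
    and "is_reflection_point sx sy OPT j i"
    and "\<not> is_tip sx sy i (OPT ! j)"
  shows "is_pure_reflection_point sx sy OPT j i"
proof -
  have on_seg: "OPT ! j \<in> vseg sx sy i"
    using assms(7) by (simp add: is_reflection_point_def)
  then obtain y where p: "OPT ! j = (sx i, y)" and y: "sy i < y" "y < sy i + 1"
    using assms(8) by (auto simp: vseg_def is_tip_def)
  have prv: "prv OPT j \<noteq> (sx i, y)" and nxt: "nxt OPT j \<noteq> (sx i, y)"
    using neighbours_notin_vseg[OF assms(3,5,6) on_seg] on_seg p by auto
  have two: "2 \<le> length OPT"
    using length_ge_2_if_nxt_neq[OF assms(5)] nxt p by simp
  have local_min: "dist (prv OPT j) (sx i, y) + dist (sx i, y) (nxt OPT j)
      \<le> dist (prv OPT j) (sx i, s) + dist (sx i, s) (nxt OPT j)"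
    if "\<bar>y - s\<bar> < min (y - sy i) (sy i + 1 - y)" for s
  proof -
    have "(sx i, s) \<in> vseg sx sy i" using that by (auto simp: vseg_def)
    then show ?thesis
      using opt_tour_legs_le_move_along_seg[OF assms(2,1,5) two assms(6) on_seg] p
      by simp
  qed
  then have "vec_angle (prv OPT j - OPT ! j) (0, 1) = vec_angle (nxt OPT j - OPT ! j) (0, - 1)"
    unfolding p using prv nxt y local_min
    by (intro vec_angle_eq_if_vertical_local_min[where d = "min (y - sy i) (sy i + 1 - y)"]) auto
  then show ?thesis using assms(7) by (simp add: is_pure_reflection_point_def)
qed

end
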